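(* Let $A,C\in\mathbb{C}^{n\times n}$ be Hermitian positive semidefinite, let $B\in\mathbb{C}^{n\times n}$ be invertible, and let $H=\begin{bmatrix} A & B\\ B^* & -C\end{bmatrix}$. Set \[ \alpha=\sup_{x\neq 0}\frac{x^*Ax}{x^*\sqrt{BB^*}x},\qquad \gamma=\sup_{x\neq 0}\frac{x^*Cx}{x^*\sqrt{B^*B}x}. \] Then $H$ is invertible and \[ \|H^{-1}\|\le \|B^{-1}\|\bigl(1+\max\{\alpha,\gamma\}+\alpha\gamma\bigr). \]
   Context: $\|\cdot\|$ is the spectral norm and $\sqrt{X}$ the positive semidefinite square root of a positive semidefinite matrix $X$. *)

theory Defs
  imports "HOL-Analysis.Analysis"
begin

definition cadj :: "complex^'n^'m \<Rightarrow> complex^'m^'n" where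
  "cadj M = (\<chi> i j. cnj (M $ j $ i))"

definition qform :: "complex^'n^'n \<Rightarrow> complex^'n \<Rightarrow> complex" where
  "qform M x = (\<Sum>i\<in>UNIV. cnj (x $ i) * (M *v x) $ i)"

definition hermitian :: "complex^'n^'n \<Rightarrow> bool" where
  "hermitian M \<longleftrightarrow> cadj M = M"

text \<open>Hermitian positive semidefinite: x^* M x \<ge> 0 for all x (it is real since M is Hermitian).\<close>
definition psd :: "complex^'n^'n \<Rightarrow> bool" where
  "psd M \<longleftrightarrow> hermitian M \<and> (\<forall>x. 0 \<le> Re (qform M x))"

definition psd_sqrt :: "complex^'n^'n \<Rightarrow> complex^'n^'n" where
  "psd_sqrt M = (THE X. psd X \<and> X ** X = M)"

definition spec_norm :: "complex^'n^'m \<Rightarrow> real" where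
  "spec_norm M = onorm (\<lambda>x. M *v x)"

definition block_H :: "complex^'n^'n \<Rightarrow> complex^'n^'n \<Rightarrow> complex^'n^'n \<Rightarrow> complex^('n+'n)^('n+'n)" where
  "block_H A B C = (\<chi> i j. case i of
       Inl a \<Rightarrow> (case j of Inl b \<Rightarrow> A $ a $ b | Inr b \<Rightarrow> B $ a $ b)
     | Inr a \<Rightarrow> (case j of Inl b \<Rightarrow> cadj B $ a $ b | Inr b \<Rightarrow> - (C $ a $ b)))"

end

theory Submission
  imports Defs
begin

text \<open>Write \<open>H (x, y) = (f, h)\<close> and let \<open>S = \<surd>(B B\<^sup>*)\<close>, \<open>T = \<surd>(B\<^sup>* B)\<close>. Then \<open>B\<close> is an isometry
  from the \<open>T\<close>-norm onto the \<open>S\<^sup>-\<^sup>1\<close>-norm and \<open>B\<^sup>*\<close> one from the \<open>S\<close>-norm onto the \<open>T\<^sup>-\<^sup>1\<close>-norm, while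
  \<open>\<alpha>\<close> and \<open>\<gamma>\<close> are the best constants in \<open>A \<le> \<alpha> S\<close> and \<open>C \<le> \<gamma> T\<close>. If \<open>h = 0\<close>, pairing the first block
  row with \<open>x\<close> gives \<open>x\<^sup>*A x + y\<^sup>*C y = Re (x\<^sup>* f) \<le> \<parallel>x\<parallel>\<^bsub>S\<^esub> \<parallel>f\<parallel>\<^bsub>S\<^sup>-\<^sup>1\<^esub>\<close>; combined with
  \<open>C T\<^sup>-\<^sup>1 C \<le> \<gamma> C\<close> this yields \<open>\<parallel>x\<parallel>\<^bsub>S\<^esub> \<le> \<gamma> \<parallel>f\<parallel>\<^bsub>S\<^sup>-\<^sup>1\<^esub>\<close> and then \<open>\<parallel>y\<parallel>\<^bsub>T\<^esub> \<le> (1 + \<alpha>\<gamma>) \<parallel>f\<parallel>\<^bsub>S\<^sup>-\<^sup>1\<^esub>\<close>.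
  The case \<open>f = 0\<close> is the same statement for \<open>(C, B\<^sup>*, A)\<close>. Superposing both cases and using
  \<open>\<parallel>x\<parallel>\<^sup>2 \<le> \<parallel>B\<^sup>-\<^sup>1\<parallel> \<parallel>x\<parallel>\<^bsub>S\<^esub>\<^sup>2\<close> and \<open>\<parallel>f\<parallel>\<^bsub>S\<^sup>-\<^sup>1\<^esub>\<^sup>2 \<le> \<parallel>B\<^sup>-\<^sup>1\<parallel> \<parallel>f\<parallel>\<^sup>2\<close> bounds \<open>\<parallel>H\<^sup>-\<^sup>1\<parallel>\<close> by \<open>\<parallel>B\<^sup>-\<^sup>1\<parallel>\<close> times
  the norm \<open>1 + max \<alpha> \<gamma> + \<alpha>\<gamma>\<close> of a symmetric \<open>2 \<times> 2\<close> matrix.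

  The square root of a positive semidefinite \<open>M\<close> comes from Visser's iteration \<open>W \<mapsto> (Y + W\<^sup>2)/2\<close>
  for the contraction \<open>Y = 1 - M/c\<close>: the iterates and their increments are polynomials in \<open>Y\<close>
  with nonnegative coefficients, so the iteration increases in the Loewner order and converges, and
  \<open>\<surd>c (1 - W)\<close> is a square root of \<open>M\<close> that commutes with everything commuting with \<open>M\<close>.\<close>

section \<open>Sesquilinear and quadratic forms\<close>

definition cinner :: "complex^'n \<Rightarrow> complex^'n \<Rightarrow> complex" where
  "cinner u v = (\<Sum>i\<in>UNIV. cnj (u $ i) * v $ i)"

definition quad :: "complex^'n^'n \<Rightarrow> complex^'n \<Rightarrow> real" where
  "quad M x = Re (qform M x)"

lemma qform_eq_cinner: "qform M x = cinner x (M *v x)"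
  by (simp add: qform_def cinner_def)

lemma Re_cinner_eq_inner: "Re (cinner u v) = inner u v"
  by (simp add: cinner_def inner_vec_def inner_complex_def)

lemma Re_cinner_self: "Re (cinner x x) = (norm x)\<^sup>2"
  by (simp add: Re_cinner_eq_inner power2_norm_eq_inner)

lemma Re_cinner_le: "Re (cinner u v) \<le> norm u * norm v"
  unfolding Re_cinner_eq_inner by (rule norm_cauchy_schwarz)

lemma cinner_add_right: "cinner u (v + w) = cinner u v + cinner u w"
  by (simp add: cinner_def distrib_left sum.distrib)

lemma cinner_add_left: "cinner (u + v) w = cinner u w + cinner v w"
  by (simp add: cinner_def distrib_right sum.distrib)

lemma cinner_diff_right: "cinner u (v - w) = cinner u v - cinner u w"
  by (simp add: cinner_def right_diff_distrib sum_subtractf)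

lemma cinner_diff_left: "cinner (u - v) w = cinner u w - cinner v w"
  by (simp add: cinner_def left_diff_distrib sum_subtractf)

lemma cinner_minus_right: "cinner u (- v) = - cinner u v"
  by (simp add: cinner_def sum_negf)

lemma cinner_minus_left: "cinner (- u) v = - cinner u v"
  by (simp add: cinner_def sum_negf)

lemma cinner_zero_right [simp]: "cinner u 0 = 0"
  by (simp add: cinner_def)

lemma cinner_scaleR_right: "cinner u (r *\<^sub>R v) = of_real r * cinner u v"
  by (simp add: cinner_def sum_distrib_left mult_ac scaleR_conv_of_real[where 'a=complex])

lemma cinner_scaleR_left: "cinner (r *\<^sub>R u) v = of_real r * cinner u v"
  by (simp add: cinner_def sum_distrib_left mult_ac scaleR_conv_of_real[where 'a=complex])

lemma cinner_smult_right: "cinner u (c *s v) = c * cinner u v"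
  by (simp add: cinner_def sum_distrib_left mult_ac)

lemma cinner_smult_left: "cinner (c *s u) v = cnj c * cinner u v"
  by (simp add: cinner_def sum_distrib_left mult_ac)

lemma cnj_cinner: "cnj (cinner u v) = cinner v u"
  by (simp add: cinner_def mult.commute)

lemma cinner_matrix_right: "cinner u (M *v v) = cinner (cadj M *v u) v"
proof -
  have "cinner u (M *v v) = (\<Sum>i\<in>UNIV. \<Sum>j\<in>UNIV. cnj (u $ i) * M $ i $ j * v $ j)"
    by (simp add: cinner_def matrix_vector_mult_def sum_distrib_left mult_ac)
  also have "\<dots> = (\<Sum>j\<in>UNIV. \<Sum>i\<in>UNIV. cnj (u $ i) * M $ i $ j * v $ j)"
    by (rule sum.swap)
  also have "\<dots> = cinner (cadj M *v u) v"
    by (simp add: cinner_def matrix_vector_mult_def cadj_def sum_distrib_right sum_distrib_left mult_ac)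
  finally show ?thesis .
qed

lemma cadj_cadj [simp]: "cadj (cadj M) = M"
  by (simp add: cadj_def vec_eq_iff)

lemma cinner_matrix_left: "cinner (M *v u) v = cinner u (cadj M *v v)"
  using cinner_matrix_right[of u "cadj M" v] by simp

lemma cadj_mult: "cadj (A ** B) = cadj B ** cadj A"
  by (simp add: cadj_def matrix_matrix_mult_def vec_eq_iff mult.commute)

lemma cadj_mat_1 [simp]: "cadj (mat 1 :: complex^'n^'n) = mat 1"
  by (simp add: cadj_def mat_def vec_eq_iff)

lemma cadj_add: "cadj (A + B) = cadj A + cadj B"
  by (simp add: cadj_def vec_eq_iff)

lemma cadj_diff: "cadj (A - B) = cadj A - cadj B"
  by (simp add: cadj_def vec_eq_iff)

lemma cadj_scaleR: "cadj (r *\<^sub>R A) = r *\<^sub>R cadj A"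
  by (simp add: cadj_def vec_eq_iff)

lemma scaleR_matrix_vector_mult: "(r *\<^sub>R (A::'a::real_algebra_1^'n^'m)) *v x = r *\<^sub>R (A *v x)"
  by (simp add: matrix_vector_mult_def vec_eq_iff scaleR_sum_right)

lemma matrix_vector_mult_smult: "(A::'a::comm_semiring_1^'n^'m) *v (c *s x) = c *s (A *v x)"
  by (simp add: matrix_vector_mult_def vec_eq_iff sum_distrib_left mult_ac)

lemma matrix_vector_mult_uminus_right: "(A::'a::ring_1^'n^'m) *v (- x) = - (A *v x)"
  by (simp add: matrix_vector_mult_def vec_eq_iff sum_negf)

lemma cadj_inverse:
  fixes M N :: "complex^'n^'n"
  shows "M ** N = mat 1 \<Longrightarrow> cadj N ** cadj M = mat 1"
  by (metis cadj_mat_1 cadj_mult)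

lemma hermitian_cinner: "hermitian M \<Longrightarrow> cinner u (M *v v) = cinner (M *v u) v"
  by (simp add: hermitian_def cinner_matrix_right)

lemma hermitian_add: "hermitian A \<Longrightarrow> hermitian B \<Longrightarrow> hermitian (A + B)"
  by (simp add: hermitian_def cadj_add)

lemma hermitian_diff: "hermitian A \<Longrightarrow> hermitian B \<Longrightarrow> hermitian (A - B)"
  by (simp add: hermitian_def cadj_diff)

lemma hermitian_scaleR: "hermitian A \<Longrightarrow> hermitian (r *\<^sub>R A)"
  by (simp add: hermitian_def cadj_scaleR)

lemma hermitian_mat_1: "hermitian (mat 1)"
  by (simp add: hermitian_def)

lemma hermitian_congruence: "hermitian P \<Longrightarrow> hermitian (cadj M ** P ** M)"
  by (simp add: hermitian_def cadj_mult matrix_mul_assoc)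

lemma qform_hermitian: "hermitian M \<Longrightarrow> qform M x = of_real (quad M x)"
proof -
  assume "hermitian M"
  then have "cnj (qform M x) = qform M x"
    by (simp add: qform_eq_cinner cnj_cinner hermitian_cinner)
  then show ?thesis by (simp add: quad_def complex_eq_iff)
qed

lemma quad_eq_Re_cinner: "quad M x = Re (cinner x (M *v x))"
  by (simp add: quad_def qform_eq_cinner)

lemma quad_congruence: "quad (cadj M ** P ** M) x = quad P (M *v x)"
  by (simp add: quad_eq_Re_cinner cinner_matrix_right matrix_vector_mul_assoc[symmetric])

lemma quad_add_matrix: "quad (A + B) x = quad A x + quad B x"
  by (simp add: quad_eq_Re_cinner matrix_vector_mult_add_rdistrib cinner_add_right)

lemma quad_diff_matrix: "quad (A - B) x = quad A x - quad B x"
  by (simp add: quad_eq_Re_cinner matrix_vector_mult_diff_rdistrib cinner_diff_right)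

lemma quad_scaleR_matrix: "quad (r *\<^sub>R A) x = r * quad A x"
  by (simp add: quad_eq_Re_cinner scaleR_matrix_vector_mult cinner_scaleR_right)

lemma quad_mat_1: "quad (mat 1) x = (norm x)\<^sup>2"
  by (simp add: quad_eq_Re_cinner Re_cinner_self)

lemma quad_zero_vector [simp]: "quad M 0 = 0"
  by (simp add: quad_eq_Re_cinner)

lemma quad_uminus_vector: "quad M (- x) = quad M x"
  by (simp add: quad_eq_Re_cinner matrix_vector_mult_uminus_right cinner_minus_left cinner_minus_right)

lemma quad_le_norm_mult_norm: "quad M x \<le> norm x * norm (M *v x)"
  unfolding quad_eq_Re_cinner by (rule Re_cinner_le)

lemma quad_le_onorm: "quad M x \<le> onorm ((*v) M) * (norm x)\<^sup>2"
proof -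
  have "quad M x \<le> norm x * (onorm ((*v) M) * norm x)"
    using quad_le_norm_mult_norm[of M x] onorm[of "(*v) M" x] by (simp add: mult_left_mono order_trans)
  then show ?thesis by (simp add: power2_eq_square mult_ac)
qed

lemma psd_hermitian: "psd M \<Longrightarrow> hermitian M"
  by (simp add: psd_def)

lemma psd_quad_nonneg: "psd M \<Longrightarrow> 0 \<le> quad M x"
  by (simp add: psd_def quad_def)

lemma psdI: "hermitian M \<Longrightarrow> (\<And>x. 0 \<le> quad M x) \<Longrightarrow> psd M"
  by (simp add: psd_def quad_def)

lemma psd_add: "psd A \<Longrightarrow> psd B \<Longrightarrow> psd (A + B)"
  by (intro psdI hermitian_add) (auto simp: psd_hermitian quad_add_matrix psd_quad_nonneg)

lemma psd_scaleR: "psd A \<Longrightarrow> 0 \<le> r \<Longrightarrow> psd (r *\<^sub>R A)"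
  by (intro psdI hermitian_scaleR) (auto simp: psd_hermitian quad_scaleR_matrix psd_quad_nonneg)

lemma psd_zero: "psd 0"
  by (intro psdI) (auto simp: hermitian_def cadj_def vec_eq_iff quad_eq_Re_cinner)

lemma psd_mat_1: "psd (mat 1)"
  by (intro psdI) (auto simp: hermitian_def quad_mat_1)

lemma psd_congruence: "psd P \<Longrightarrow> psd (cadj M ** P ** M)"
  by (intro psdI hermitian_congruence) (auto simp: psd_hermitian quad_congruence psd_quad_nonneg)

lemma qform_add_smult:
  "qform M (u + s *s v) = qform M u + s * cinner u (M *v v) + cnj s * cinner v (M *v u) + (cnj s * s) * qform M v"
  unfolding qform_eq_cinner matrix_vector_right_distrib matrix_vector_mult_smult
  by (simp add: cinner_add_left cinner_add_right cinner_smult_left cinner_smult_right ring_distribs add_ac mult_ac)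
lemma quad_add_smult:
  assumes "hermitian P"
  shows "quad P (u + s *s v) = quad P u + 2 * Re (s * cinner u (P *v v)) + (cmod s)\<^sup>2 * quad P v"
proof -
  have "cinner v (P *v u) = cnj (cinner u (P *v v))"
    by (simp add: hermitian_cinner[OF assms] cnj_cinner)
  then have "qform P (u + s *s v) = qform P u + s * cinner u (P *v v) + cnj (s * cinner u (P *v v))
      + of_real ((cmod s)\<^sup>2) * qform P v"
    by (simp add: qform_add_smult complex_norm_square mult.commute del: of_real_power)
  then show ?thesis by (simp add: quad_def)
qed

lemma quad_add:
  assumes "hermitian P"
  shows "quad P (u + v) = quad P u + 2 * Re (cinner u (P *v v)) + quad P v"
  using quad_add_smult[OF assms, of u 1 v] by simp

text \<open>The real quadratic \<open>t \<mapsto> quad P (u - t e\<^sup>i\<^sup>\<theta> v)\<close>, with \<open>\<theta>\<close> the phase of \<open>u\<^sup>* P v\<close>, is nonnegative.\<close>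
lemma psd_cauchy_schwarz:
  assumes "psd P"
  shows "(cmod (cinner u (P *v v)))\<^sup>2 \<le> quad P u * quad P v"
proof (cases "cinner u (P *v v) = 0")
  case True
  then show ?thesis using psd_quad_nonneg[OF assms] by simp
next
  case False
  define b where "b = cinner u (P *v v)"
  define m where "m = cmod b"
  have m0: "m > 0" using False by (simp add: b_def m_def)
  have nonneg: "0 \<le> quad P u - 2 * t * m + t\<^sup>2 * quad P v" for t :: real
  proof -
    define s where "s = - (complex_of_real t * cnj b / complex_of_real m)"
    have "cnj b * b = complex_of_real (m * m)"
      by (metis complex_norm_square mult.commute power2_eq_square m_def)
    then have "s * b = - complex_of_real (t * m)"
      using m0 by (simp add: s_def field_simps)
    moreover have "cmod s = \<bar>t\<bar>"
      using m0 by (simp add: s_def norm_mult norm_divide m_def)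
    ultimately show ?thesis
      using psd_quad_nonneg[OF assms, of "u + s *s v"]
      by (simp add: quad_add_smult[OF psd_hermitian[OF assms]] b_def[symmetric])
  qed
  have "quad P v > 0"
  proof (rule ccontr)
    assume "\<not> quad P v > 0"
    then have "quad P v = 0" using psd_quad_nonneg[OF assms, of v] by simp
    with nonneg[of "(quad P u + 1) / (2 * m)"] m0 show False by (simp add: field_simps)
  qed
  with nonneg[of "m / quad P v"] have "m\<^sup>2 \<le> quad P u * quad P v"
    by (simp add: field_simps power2_eq_square)
  then show ?thesis by (simp add: m_def b_def)
qed

lemma psd_cauchy_schwarz_Re:
  assumes "psd P"
  shows "Re (cinner u (P *v v)) \<le> sqrt (quad P u) * sqrt (quad P v)"
proof -
  have "Re (cinner u (P *v v)) \<le> sqrt ((cmod (cinner u (P *v v)))\<^sup>2)"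
    by (simp add: complex_Re_le_cmod)
  also have "\<dots> \<le> sqrt (quad P u * quad P v)"
    by (rule real_sqrt_le_mono[OF psd_cauchy_schwarz[OF assms]])
  finally show ?thesis by (simp add: real_sqrt_mult)
qed

lemma psd_sqrt_quad_triangle:
  assumes "psd P"
  shows "sqrt (quad P (u + v)) \<le> sqrt (quad P u) + sqrt (quad P v)"
proof -
  have qu: "0 \<le> quad P u" and qv: "0 \<le> quad P v" using psd_quad_nonneg[OF assms] by auto
  have "quad P (u + v) \<le> quad P u + 2 * (sqrt (quad P u) * sqrt (quad P v)) + quad P v"
    using quad_add[OF psd_hermitian[OF assms], of u v] psd_cauchy_schwarz_Re[OF assms, of u v] by linarith
  also have "\<dots> = (sqrt (quad P u) + sqrt (quad P v))\<^sup>2"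
    using qu qv by (simp add: power2_eq_square algebra_simps)
  finally show ?thesis
    by (intro real_le_lsqrt) (use qu qv in auto)
qed

lemma psd_mult_eq_0_if_quad_eq_0:
  assumes "psd P" and "quad P v = 0"
  shows "P *v v = 0"
proof -
  have "(cmod (cinner (P *v v) (P *v v)))\<^sup>2 \<le> 0"
    using psd_cauchy_schwarz[OF assms(1), of "P *v v" v] assms(2) by simp
  then have "Re (cinner (P *v v) (P *v v)) = 0" by simp
  then show ?thesis by (simp add: Re_cinner_self)
qed

lemma square_le_of_square_le_sqrt_mult:
  fixes t c :: real
  assumes "0 \<le> c" and "t\<^sup>2 \<le> sqrt c * t"
  shows "t\<^sup>2 \<le> c"
proof (cases "t \<le> 0")
  case True
  then have "sqrt c * t \<le> 0" by (simp add: mult_nonneg_nonpos assms(1))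
  then show ?thesis using assms by linarith
next
  case False
  have "t \<le> sqrt c"
    by (rule mult_right_le_imp_le[of t t "sqrt c"]) (use assms(2) False in \<open>simp_all add: power2_eq_square\<close>)
  then have "t\<^sup>2 \<le> (sqrt c)\<^sup>2" by (rule power_mono) (use False in simp)
  then show ?thesis using assms(1) by simp
qed

lemma psd_norm_mult_le:
  assumes "psd P" and bound: "\<And>u. norm (P *v u) \<le> l * norm u"
  shows "(norm (P *v v))\<^sup>2 \<le> l * quad P v"
proof -
  define w where "w = P *v v"
  have "norm (P *v axis undefined 1) \<le> l"
    using bound[of "axis undefined 1"] by simp
  then have "0 \<le> l" using norm_ge_zero order_trans by blast
  have "quad P w \<le> norm w * norm (P *v w)" by (rule quad_le_norm_mult_norm)
  also have "\<dots> \<le> l * (norm w)\<^sup>2"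
    using mult_left_mono[OF bound norm_ge_zero] by (simp add: power2_eq_square mult_ac)
  finally have qw: "quad P w \<le> l * (norm w)\<^sup>2" .
  have "(norm w)\<^sup>2 = Re (cinner v (P *v w))"
    by (simp only: w_def Re_cinner_self[symmetric] hermitian_cinner[OF psd_hermitian[OF assms(1)]])
  also have "\<dots> \<le> sqrt (quad P v) * sqrt (quad P w)" by (rule psd_cauchy_schwarz_Re[OF assms(1)])
  also have "\<dots> \<le> sqrt (quad P v) * sqrt (l * (norm w)\<^sup>2)"
    by (intro mult_left_mono real_sqrt_le_mono qw) (simp add: psd_quad_nonneg[OF assms(1)])
  also have "\<dots> = sqrt (l * quad P v) * norm w"
    using \<open>0 \<le> l\<close> by (simp add: real_sqrt_mult mult_ac)
  finally show ?thesis
    unfolding w_def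
    by (rule square_le_of_square_le_sqrt_mult[rotated]) (simp add: \<open>0 \<le> l\<close> psd_quad_nonneg[OF assms(1)])
qed

section \<open>The positive semidefinite square root\<close>

lemma matrix_add_rdistrib: "((A::'a::semiring_1^'n^'m) + B) ** C = A ** C + B ** C"
  by (simp add: matrix_matrix_mult_def vec_eq_iff distrib_right sum.distrib)

lemma matrix_diff_rdistrib: "((A::'a::ring_1^'n^'m) - B) ** C = A ** C - B ** C"
  by (simp add: matrix_matrix_mult_def vec_eq_iff left_diff_distrib sum_subtractf)

lemma matrix_diff_ldistrib: "(A::'a::ring_1^'n^'m) ** (B - C) = A ** B - A ** C"
  by (simp add: matrix_matrix_mult_def vec_eq_iff right_diff_distrib sum_subtractf)

primrec mat_pow :: "'a::semiring_1^'n^'n \<Rightarrow> nat \<Rightarrow> 'a^'n^'n" where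
  "mat_pow Y 0 = mat 1"
| "mat_pow Y (Suc n) = Y ** mat_pow Y n"

lemma mat_pow_add: "mat_pow Y (m + n) = mat_pow Y m ** mat_pow Y n"
  by (induct m) (simp_all add: matrix_mul_assoc)

lemma mat_pow_commute: "Q ** Y = Y ** Q \<Longrightarrow> Q ** mat_pow Y n = mat_pow Y n ** Q"
  by (induct n) (simp_all, metis matrix_mul_assoc)

lemma psd_mat_pow:
  assumes "psd Y"
  shows "psd (mat_pow Y n)"
proof (induction n rule: nat_induct2)
  case (step n)
  have "mat_pow Y (n + 2) = cadj Y ** mat_pow Y n ** Y"
    using mat_pow_commute[of Y Y n] psd_hermitian[OF assms]
    by (simp add: hermitian_def matrix_mul_assoc)
  then show ?case using psd_congruence[OF step] by simp
qed (use assms psd_mat_1 in simp_all)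

inductive_set power_cone :: "complex^'n^'n \<Rightarrow> (complex^'n^'n) set" for Y where
  power: "mat_pow Y n \<in> power_cone Y"
| zero: "0 \<in> power_cone Y"
| add: "P \<in> power_cone Y \<Longrightarrow> Q \<in> power_cone Y \<Longrightarrow> P + Q \<in> power_cone Y"
| scaleR: "P \<in> power_cone Y \<Longrightarrow> 0 \<le> r \<Longrightarrow> r *\<^sub>R P \<in> power_cone Y"

lemma self_in_power_cone: "Y \<in> power_cone Y"
  using power_cone.power[of Y 1] by simp

lemma psd_power_cone:
  assumes "psd Y" and "P \<in> power_cone Y"
  shows "psd P"
  using assms(2) by induction (auto intro: psd_mat_pow[OF assms(1)] psd_zero psd_add psd_scaleR)

lemma power_cone_mult:
  assumes "P \<in> power_cone Y" and Q: "Q \<in> power_cone Y"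
  shows "P ** Q \<in> power_cone Y"
  using assms(1)
proof induction
  case (power n)
  from Q show ?case
    by induction (auto simp: mat_pow_add[symmetric] matrix_add_ldistrib matrix_scalar_ac scalar_matrix_assoc[symmetric]
        intro: power_cone.intros)
qed (auto simp: matrix_add_rdistrib scalar_matrix_assoc[symmetric] intro: power_cone.intros Q)

lemma power_cone_commute:
  assumes "Q ** Y = Y ** Q" and "P \<in> power_cone Y"
  shows "Q ** P = P ** Q"
  using assms(2) by induction
    (simp_all add: assms(1) add: mat_pow_commute matrix_add_ldistrib matrix_add_rdistrib matrix_scalar_ac scalar_matrix_assoc[symmetric])

lemma power_cone_mult_commute: "P \<in> power_cone Y \<Longrightarrow> Q \<in> power_cone Y \<Longrightarrow> P ** Q = Q ** P"
  using power_cone_commute[of Y Y] power_cone_commute[of P Y] by simp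

lemma matrix_diff_squares: "(P::'a::ring_1^'n^'n) ** Q = Q ** P \<Longrightarrow> P ** P - Q ** Q = (P - Q) ** (P + Q)"
  by (simp add: matrix_diff_rdistrib matrix_add_ldistrib)

text \<open>Visser's iteration: a fixed point \<open>W = (Y + W\<^sup>2)/2\<close> satisfies \<open>(1 - W)\<^sup>2 = 1 - Y\<close>.\<close>
primrec sqrt_iter :: "complex^'n^'n \<Rightarrow> nat \<Rightarrow> complex^'n^'n" where
  "sqrt_iter Y 0 = 0"
| "sqrt_iter Y (Suc k) = (1/2) *\<^sub>R (Y + sqrt_iter Y k ** sqrt_iter Y k)"

lemma sqrt_iter_in_power_cone: "sqrt_iter Y k \<in> power_cone Y"
  by (induct k) (auto intro!: power_cone.intros power_cone_mult self_in_power_cone)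

lemma sqrt_iter_increment_in_power_cone: "sqrt_iter Y (Suc k) - sqrt_iter Y k \<in> power_cone Y"
proof (induct k)
  case 0
  show ?case by (auto intro: power_cone.intros self_in_power_cone)
next
  case (Suc k)
  let ?P = "sqrt_iter Y (Suc k)" and ?Q = "sqrt_iter Y k"
  have "sqrt_iter Y (Suc (Suc k)) - ?P = (1/2) *\<^sub>R (Y + ?P ** ?P) - (1/2) *\<^sub>R (Y + ?Q ** ?Q)"
    by (rule arg_cong2[where f = minus]; rule sqrt_iter.simps(2))
  also have "\<dots> = (1/2) *\<^sub>R (?P ** ?P - ?Q ** ?Q)"
    by (simp only: scaleR_diff_right[symmetric] add_diff_add diff_self add_0_left)
  also have "?P ** ?P - ?Q ** ?Q = (?P - ?Q) ** (?P + ?Q)"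
    by (rule matrix_diff_squares[OF power_cone_mult_commute[OF sqrt_iter_in_power_cone sqrt_iter_in_power_cone]])
  finally have step: "sqrt_iter Y (Suc (Suc k)) - ?P = (1/2) *\<^sub>R ((?P - ?Q) ** (?P + ?Q))" .
  show ?case
    unfolding step by (intro power_cone.scaleR power_cone_mult power_cone.add sqrt_iter_in_power_cone Suc) simp
qed

definition contraction :: "complex^'n^'n \<Rightarrow> bool" where
  "contraction M \<longleftrightarrow> (\<forall>x. norm (M *v x) \<le> norm x)"

lemma contraction_sqrt_iter:
  assumes "contraction Y"
  shows "contraction (sqrt_iter Y k)"
proof (induct k)
  case 0
  show ?case by (simp add: contraction_def)
next
  case (Suc k)
  let ?W = "sqrt_iter Y k"
  show ?case unfolding contraction_def
  proof
    fix x
    have "norm (sqrt_iter Y (Suc k) *v x) \<le> (1/2) * (norm (Y *v x) + norm (?W *v (?W *v x)))"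
      by (simp add: scaleR_matrix_vector_mult matrix_vector_mult_add_rdistrib matrix_vector_mul_assoc
          norm_triangle_ineq)
    also have "\<dots> \<le> norm x"
    proof -
      have "norm (Y *v x) \<le> norm x" "norm (?W *v (?W *v x)) \<le> norm x"
        using assms Suc unfolding contraction_def by (blast intro: order_trans)+
      then show ?thesis by (simp add: field_simps)
    qed
    finally show "norm (sqrt_iter Y (Suc k) *v x) \<le> norm x" .
  qed
qed

lemma contraction_quad_le:
  assumes "contraction M"
  shows "quad M x \<le> (norm x)\<^sup>2"
proof -
  have "quad M x \<le> norm x * norm (M *v x)" by (rule quad_le_norm_mult_norm)
  also have "\<dots> \<le> norm x * norm x"
    using assms by (simp add: contraction_def mult_left_mono)
  finally show ?thesis by (simp add: power2_eq_square)
qed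

lemma cinner_polarization:
  "cinner u (M *v v) = (qform M (u + 1 *s v) - qform M (u + (-1) *s v)
      - \<i> * qform M (u + \<i> *s v) + \<i> * qform M (u + (-\<i>) *s v)) / 4"
  unfolding qform_add_smult by (simp add: field_simps)

lemma matrix_entry_eq_cinner: "M $ i $ j = cinner (axis i 1) (M *v axis j 1)"
  by (simp add: cinner_def matrix_vector_mult_def axis_def if_distrib if_distribR sum.delta' cong: if_cong)

text \<open>By polarization, convergence of all quadratic forms forces convergence of the entries.\<close>
lemma hermitian_seq_convergent:
  fixes F :: "nat \<Rightarrow> complex^'n^'n"
  assumes herm: "\<And>k. hermitian (F k)" and conv: "\<And>x. convergent (\<lambda>k. quad (F k) x)"
  shows "convergent F"
proof -
  have qform_conv: "(\<lambda>k. qform (F k) x) \<longlonglongrightarrow> lim (\<lambda>k. qform (F k) x)" for x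
  proof -
    have "(\<lambda>k. complex_of_real (quad (F k) x)) \<longlonglongrightarrow> of_real (lim (\<lambda>k. quad (F k) x))"
      using conv[of x] by (intro tendsto_of_real) (simp add: convergent_LIMSEQ_iff)
    then have "convergent (\<lambda>k. qform (F k) x)"
      by (auto simp: qform_hermitian[OF herm] intro: convergentI)
    then show ?thesis by (simp add: convergent_LIMSEQ_iff)
  qed
  have "(\<lambda>k. F k $ i $ j) \<longlonglongrightarrow> (\<chi> i j. lim (\<lambda>k. F k $ i $ j)) $ i $ j" for i j
  proof -
    let ?l = "\<lambda>s. lim (\<lambda>k. qform (F k) (axis i 1 + s *s axis j 1))"
    have "(\<lambda>k. F k $ i $ j) \<longlonglongrightarrow> (?l 1 - ?l (-1) - \<i> * ?l \<i> + \<i> * ?l (-\<i>)) / 4"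
      unfolding matrix_entry_eq_cinner cinner_polarization by (intro tendsto_intros qform_conv) simp
    then have "convergent (\<lambda>k. F k $ i $ j)" by (rule convergentI)
    then show ?thesis by (simp add: convergent_LIMSEQ_iff)
  qed
  then have "F \<longlonglongrightarrow> (\<chi> i j. lim (\<lambda>k. F k $ i $ j))"
    by (intro vec_tendstoI) simp
  then show ?thesis by (rule convergentI)
qed

lemma sqrt_iter_convergent:
  assumes "psd Y" and "contraction Y"
  shows "convergent (sqrt_iter Y)"
proof (rule hermitian_seq_convergent)
  show "hermitian (sqrt_iter Y k)" for k
    by (rule psd_hermitian[OF psd_power_cone[OF assms(1) sqrt_iter_in_power_cone]])
  fix x
  have "incseq (\<lambda>k. quad (sqrt_iter Y k) x)"
  proof (rule incseq_SucI)
    fix k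
    show "quad (sqrt_iter Y k) x \<le> quad (sqrt_iter Y (Suc k)) x"
      using psd_quad_nonneg[OF psd_power_cone[OF assms(1) sqrt_iter_increment_in_power_cone], of k x]
      by (simp add: quad_diff_matrix)
  qed
  moreover have "quad (sqrt_iter Y k) x \<le> (norm x)\<^sup>2" for k
    by (rule contraction_quad_le[OF contraction_sqrt_iter[OF assms(2)]])
  ultimately obtain L where "(\<lambda>k. quad (sqrt_iter Y k) x) \<longlonglongrightarrow> L"
    using incseq_convergent[of _ "(norm x)\<^sup>2"] by blast
  then show "convergent (\<lambda>k. quad (sqrt_iter Y k) x)"
    by (rule convergentI)
qed

lemma tendsto_matrix_mult [tendsto_intros]:
  fixes F :: "'a \<Rightarrow> complex^'n^'m" and G :: "'a \<Rightarrow> complex^'k^'n"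
  shows "(F \<longlongrightarrow> A) net \<Longrightarrow> (G \<longlongrightarrow> B) net \<Longrightarrow> ((\<lambda>k. F k ** G k) \<longlongrightarrow> A ** B) net"
  unfolding matrix_matrix_mult_def by (intro tendsto_intros)

lemma tendsto_cadj [tendsto_intros]:
  fixes F :: "'a \<Rightarrow> complex^'n^'m"
  shows "(F \<longlongrightarrow> A) net \<Longrightarrow> ((\<lambda>k. cadj (F k)) \<longlongrightarrow> cadj A) net"
  unfolding cadj_def by (intro tendsto_intros)

lemma tendsto_quad [tendsto_intros]:
  fixes F :: "'a \<Rightarrow> complex^'n^'n"
  shows "(F \<longlongrightarrow> A) net \<Longrightarrow> ((\<lambda>k. quad (F k) x) \<longlongrightarrow> quad A x) net"
  unfolding quad_def qform_def matrix_vector_mult_def by (intro tendsto_intros)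

lemma sqrt_iter_limit:
  assumes "psd Y" and "contraction Y"
  defines "W \<equiv> lim (sqrt_iter Y)"
  shows "W = (1/2) *\<^sub>R (Y + W ** W)" and "hermitian W" and "quad W x \<le> (norm x)\<^sup>2"
    and "Q ** Y = Y ** Q \<Longrightarrow> Q ** W = W ** Q"
proof -
  have lim: "sqrt_iter Y \<longlonglongrightarrow> W"
    using sqrt_iter_convergent[OF assms(1,2)] by (simp add: W_def convergent_LIMSEQ_iff)
  have "(\<lambda>k. sqrt_iter Y (Suc k)) \<longlonglongrightarrow> (1/2) *\<^sub>R (Y + W ** W)"
    unfolding sqrt_iter.simps by (intro tendsto_intros lim)
  then show "W = (1/2) *\<^sub>R (Y + W ** W)"
    using LIMSEQ_Suc[OF lim] LIMSEQ_unique by blast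
  have "hermitian (sqrt_iter Y k)" for k
    by (rule psd_hermitian[OF psd_power_cone[OF assms(1) sqrt_iter_in_power_cone]])
  then have "(\<lambda>k. cadj (sqrt_iter Y k)) = sqrt_iter Y"
    by (simp add: hermitian_def)
  then have "sqrt_iter Y \<longlonglongrightarrow> cadj W"
    using tendsto_cadj[OF lim] by simp
  then show "hermitian W"
    using lim LIMSEQ_unique by (auto simp: hermitian_def)
  show "quad W x \<le> (norm x)\<^sup>2"
    using contraction_quad_le[OF contraction_sqrt_iter[OF assms(2)]]
    by (intro LIMSEQ_le_const2[OF tendsto_quad[OF lim]]) auto
  assume "Q ** Y = Y ** Q"
  then have "(\<lambda>k. Q ** sqrt_iter Y k) = (\<lambda>k. sqrt_iter Y k ** Q)"
    using power_cone_commute sqrt_iter_in_power_cone by blast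
  then have "(\<lambda>k. Q ** sqrt_iter Y k) \<longlonglongrightarrow> W ** Q"
    using tendsto_matrix_mult[OF lim tendsto_const] by simp
  moreover have "(\<lambda>k. Q ** sqrt_iter Y k) \<longlonglongrightarrow> Q ** W"
    by (intro tendsto_intros lim)
  ultimately show "Q ** W = W ** Q"
    using LIMSEQ_unique by blast
qed

lemma psd_contraction_identity_minus:
  assumes psd: "psd M" and bound: "\<And>x. norm (M *v x) \<le> c * norm x" and "0 < c"
  shows "psd (mat 1 - (1/c) *\<^sub>R M)" and "contraction (mat 1 - (1/c) *\<^sub>R M)"
proof -
  let ?Y = "mat 1 - (1/c) *\<^sub>R M"
  have qM: "quad M x \<le> c * (norm x)\<^sup>2" for x
    using quad_le_norm_mult_norm[of M x] mult_left_mono[OF bound norm_ge_zero, of x x]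
    by (simp add: power2_eq_square mult_ac)
  show "psd ?Y"
  proof (rule psdI)
    show "hermitian ?Y"
      by (intro hermitian_diff hermitian_scaleR hermitian_mat_1 psd_hermitian[OF psd])
    fix x
    show "0 \<le> quad ?Y x"
      using qM[of x] \<open>0 < c\<close> by (simp add: quad_diff_matrix quad_scaleR_matrix quad_mat_1 field_simps)
  qed
  show "contraction ?Y"
    unfolding contraction_def
  proof
    fix x
    have "cinner (M *v x) x = cinner x (M *v x)"
      by (simp add: hermitian_cinner[OF psd_hermitian[OF psd]])
    then have "(norm (?Y *v x))\<^sup>2 = (norm x)\<^sup>2 - 2 / c * quad M x + (1/c)\<^sup>2 * (norm (M *v x))\<^sup>2"
      using \<open>0 < c\<close> unfolding Re_cinner_self[symmetric]
      by (simp add: matrix_vector_mult_diff_rdistrib scaleR_matrix_vector_mult cinner_diff_left cinner_diff_right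
          cinner_scaleR_left cinner_scaleR_right quad_eq_Re_cinner power2_eq_square field_simps)
    also have "\<dots> \<le> (norm x)\<^sup>2 - 2 / c * quad M x + (1/c)\<^sup>2 * (c * quad M x)"
      using psd_norm_mult_le[OF psd bound, of x] by (intro add_left_mono mult_left_mono) auto
    also have "\<dots> \<le> (norm x)\<^sup>2"
      using \<open>0 < c\<close> psd_quad_nonneg[OF psd, of x] by (simp add: power2_eq_square field_simps)
    finally show "norm (?Y *v x) \<le> norm x"
      by (rule power2_le_imp_le) simp
  qed
qed

lemma psd_sqrt_exists:
  assumes psd: "psd M"
  shows "\<exists>R. psd R \<and> R ** R = M \<and> (\<forall>Q. Q ** M = M ** Q \<longrightarrow> Q ** R = R ** Q)"
proof -
  define c where "c = onorm ((*v) M) + 1"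
  have "0 < c" by (simp add: c_def onorm_pos_le add_nonneg_pos)
  have "norm (M *v x) \<le> c * norm x" for x
    using onorm[of "(*v) M" x] by (simp add: c_def distrib_right add_increasing2)
  note shift = psd_contraction_identity_minus[OF psd this \<open>0 < c\<close>]
  define Y where "Y = mat 1 - (1/c) *\<^sub>R M"
  define W where "W = lim (sqrt_iter Y)"
  note W = sqrt_iter_limit[OF shift[folded Y_def], folded W_def]
  define R where "R = sqrt c *\<^sub>R (mat 1 - W)"
  have "psd (mat 1 - W)"
    using W(3) by (intro psdI hermitian_diff hermitian_mat_1 W(2)) (simp add: quad_diff_matrix quad_mat_1)
  then have "psd R"
    unfolding R_def by (rule psd_scaleR) (simp add: less_imp_le[OF \<open>0 < c\<close>])
  moreover have "R ** R = M"
  proof -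
    have "W + W = Y + W ** W"
      by (subst (1 2) W(1)) (simp add: scaleR_2[symmetric])
    then have "(mat 1 - W) ** (mat 1 - W) = mat 1 - Y"
      by (simp add: matrix_diff_ldistrib matrix_diff_rdistrib algebra_simps)
    then show ?thesis
      using \<open>0 < c\<close> by (simp add: R_def Y_def matrix_scalar_ac scalar_matrix_assoc[symmetric])
  qed
  moreover have "Q ** R = R ** Q" if "Q ** M = M ** Q" for Q
  proof -
    have "Q ** Y = Y ** Q"
      using that by (simp add: Y_def matrix_diff_ldistrib matrix_diff_rdistrib matrix_scalar_ac scalar_matrix_assoc[symmetric])
    then show ?thesis
      using W(4) by (simp add: R_def matrix_diff_ldistrib matrix_diff_rdistrib matrix_scalar_ac
          scalar_matrix_assoc[symmetric] scaleR_diff_right)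
  qed
  ultimately show ?thesis by blast
qed

lemma psd_commuting_sqrt_unique:
  assumes P: "psd P" and Q: "psd Q" and comm: "P ** Q = Q ** P" and sq: "P ** P = Q ** Q"
  shows "P = Q"
proof -
  define D where "D = P - Q"
  have herm: "hermitian D"
    unfolding D_def by (intro hermitian_diff psd_hermitian P Q)
  have "(P + Q) ** D = 0"
    by (simp add: D_def matrix_diff_ldistrib matrix_add_rdistrib comm sq)
  have "D *v x = 0" for x
  proof -
    have "quad P (D *v x) + quad Q (D *v x) = quad (cadj D ** (P + Q) ** D) x"
      by (simp add: quad_congruence quad_add_matrix)
    also have "cadj D ** (P + Q) ** D = 0"
      by (simp add: matrix_mul_assoc[symmetric] \<open>(P + Q) ** D = 0\<close>)
    finally have "quad P (D *v x) + quad Q (D *v x) = 0"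
      by (simp add: quad_eq_Re_cinner)
    then have "quad P (D *v x) = 0" and "quad Q (D *v x) = 0"
      using psd_quad_nonneg[OF P, of "D *v x"] psd_quad_nonneg[OF Q, of "D *v x"] by linarith+
    then have "D *v (D *v x) = 0"
      using psd_mult_eq_0_if_quad_eq_0[OF P] psd_mult_eq_0_if_quad_eq_0[OF Q] by (simp add: D_def matrix_vector_mult_diff_rdistrib)
    then have "(norm (D *v x))\<^sup>2 = 0"
      by (simp add: Re_cinner_self[symmetric] hermitian_cinner[OF herm, symmetric])
    then show ?thesis by simp
  qed
  then show ?thesis by (simp add: D_def matrix_eq matrix_vector_mult_diff_rdistrib)
qed

lemma psd_sqrt_exists_unique: "psd M \<Longrightarrow> \<exists>!X. psd X \<and> X ** X = M"
proof -
  assume "psd M"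
  then obtain R where R: "psd R" "R ** R = M" and comm: "\<And>Q. Q ** M = M ** Q \<Longrightarrow> Q ** R = R ** Q"
    using psd_sqrt_exists by blast
  have "Q = R" if "psd Q" and "Q ** Q = M" for Q
  proof (rule psd_commuting_sqrt_unique[OF that(1) R(1)])
    have "Q ** M = M ** Q"
      using that(2) by (metis matrix_mul_assoc)
    then show "Q ** R = R ** Q" by (rule comm)
    show "Q ** Q = R ** R" using that(2) R(2) by simp
  qed
  with R show ?thesis by blast
qed

lemma psd_square: "psd X \<Longrightarrow> psd (X ** X)"
  using psd_congruence[OF psd_mat_1, of X] by (simp add: psd_hermitian[unfolded hermitian_def])

lemma psd_sqrt_psd_square:
  assumes "psd M"
  shows "psd (psd_sqrt M)" and "psd_sqrt M ** psd_sqrt M = M"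
  using theI'[OF psd_sqrt_exists_unique[OF assms]] unfolding psd_sqrt_def by auto

lemma psd_sqrt_eqI: "psd X \<Longrightarrow> X ** X = M \<Longrightarrow> psd_sqrt M = X"
  unfolding psd_sqrt_def using psd_sqrt_exists_unique[OF psd_square] by (blast intro: the1_equality)

section \<open>Inverses and norm bounds\<close>

lemma matrix_inv_inverse:
  fixes M :: "complex^'n^'n"
  assumes "invertible M"
  shows "M ** matrix_inv M = mat 1" and "matrix_inv M ** M = mat 1"
proof -
  have "\<exists>N. M ** N = mat 1 \<and> N ** M = mat 1"
    using assms by (simp add: invertible_def)
  then have "M ** matrix_inv M = mat 1 \<and> matrix_inv M ** M = mat 1"
    unfolding matrix_inv_def by (rule someI_ex)
  then show "M ** matrix_inv M = mat 1" and "matrix_inv M ** M = mat 1" by auto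
qed

lemma matrix_inverse_unique:
  fixes L M R :: "complex^'n^'n"
  assumes "L ** M = mat 1" and "M ** R = mat 1"
  shows "L = R"
  by (metis assms matrix_mul_assoc matrix_mul_lid matrix_mul_rid)

lemma matrix_inv_eqI:
  fixes M N :: "complex^'n^'n"
  shows "M ** N = mat 1 \<Longrightarrow> matrix_inv M = N"
  by (metis invertible_right_inverse matrix_inv_inverse(2) matrix_inverse_unique)

lemma matrix_vector_mult_inverse: "(M::complex^'n^'n) ** N = mat 1 \<Longrightarrow> M *v (N *v v) = v"
  by (simp add: matrix_vector_mul_assoc)

lemma psd_inverse:
  assumes "psd S" and inv: "S ** Si = mat 1"
  shows "psd Si"
proof -
  have "cadj Si ** S = mat 1"
    using cadj_inverse[OF inv] psd_hermitian[OF assms(1)] by (simp add: hermitian_def)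
  then have "cadj Si = Si" by (rule matrix_inverse_unique[OF _ inv])
  then have "Si = cadj Si ** S ** Si"
    using \<open>cadj Si ** S = mat 1\<close> by (simp add: matrix_mul_assoc[symmetric] inv)
  then show ?thesis
    using psd_congruence[OF assms(1), of Si] by simp
qed

lemma quad_inverse:
  assumes "hermitian S" and "S ** Si = mat 1"
  shows "quad S (Si *v f) = quad Si f"
proof -
  have "cinner (Si *v f) (S *v (Si *v f)) = cnj (cinner f (Si *v f))"
    by (simp add: matrix_vector_mult_inverse[OF assms(2)] cnj_cinner)
  then show ?thesis by (simp add: quad_eq_Re_cinner)
qed

lemma cauchy_schwarz_inverse:
  assumes "psd S" and "S ** Si = mat 1"
  shows "Re (cinner x f) \<le> sqrt (quad S x) * sqrt (quad Si f)"
  using psd_cauchy_schwarz_Re[OF assms(1), of x "Si *v f"]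
  by (simp add: matrix_vector_mult_inverse[OF assms(2)] quad_inverse[OF psd_hermitian[OF assms(1)] assms(2)])

lemma le_mult_if_square_le_mult:
  fixes X F g :: real
  assumes "0 \<le> X" and "0 \<le> g" and "0 \<le> F" and "X\<^sup>2 \<le> g * (X * F)"
  shows "X \<le> g * F"
proof (cases "X = 0")
  case True
  then show ?thesis using assms by (simp add: zero_le_mult_iff)
next
  case False
  then show ?thesis using assms by (simp add: power2_eq_square mult_ac)
qed

text \<open>If \<open>C \<le> g T\<close> in the Loewner order then \<open>C T\<^sup>-\<^sup>1 C \<le> g C\<close>: apply Cauchy--Schwarz for \<open>C\<close>
  to \<open>y\<close> and \<open>T\<^sup>-\<^sup>1 C y\<close>.\<close>
lemma quad_inverse_mult_le:
  assumes C: "psd C" and T: "psd T" and inv: "T ** Ti = mat 1"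
    and "0 \<le> g" and le: "\<And>y. quad C y \<le> g * quad T y"
  shows "quad Ti (C *v y) \<le> g * quad C y"
proof -
  define v where "v = Ti *v (C *v y)"
  define Q where "Q = quad Ti (C *v y)"
  have "0 \<le> Q" unfolding Q_def by (rule psd_quad_nonneg[OF psd_inverse[OF T inv]])
  have "Q = Re (cinner y (C *v v))"
    by (simp add: Q_def v_def quad_eq_Re_cinner hermitian_cinner[OF psd_hermitian[OF C]])
  also have "\<dots> \<le> sqrt (quad C y) * sqrt (quad C v)" by (rule psd_cauchy_schwarz_Re[OF C])
  also have "\<dots> \<le> sqrt (quad C y) * sqrt (g * Q)"
    using le[of v] quad_inverse[OF psd_hermitian[OF T] inv, of "C *v y"]
    by (intro mult_left_mono) (auto simp: v_def Q_def psd_quad_nonneg[OF C])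
  finally have "Q\<^sup>2 \<le> (sqrt (quad C y) * sqrt (g * Q))\<^sup>2"
    using \<open>0 \<le> Q\<close> by (rule power_mono)
  also have "\<dots> = g * (Q * quad C y)"
    using psd_quad_nonneg[OF C, of y] \<open>0 \<le> g\<close> \<open>0 \<le> Q\<close> by (simp add: power_mult_distrib mult_ac)
  finally show ?thesis
    unfolding Q_def[symmetric]
    by (intro le_mult_if_square_le_mult[OF \<open>0 \<le> Q\<close> \<open>0 \<le> g\<close>]) (simp_all add: psd_quad_nonneg[OF C] mult_ac)
qed

lemma norm_cadj_matrix_vector_le:
  assumes "0 \<le> l" and bound: "\<And>v. norm (M *v v) \<le> l * norm v"
  shows "norm (cadj M *v v) \<le> l * norm v"
proof -
  define w where "w = cadj M *v v"
  have "(norm w)\<^sup>2 = Re (cinner v (M *v w))"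
    by (simp add: w_def Re_cinner_self[symmetric] cinner_matrix_left)
  also have "\<dots> \<le> norm v * (l * norm w)"
    using Re_cinner_le[of v "M *v w"] mult_left_mono[OF bound norm_ge_zero] by (blast intro: order_trans)
  finally have "norm w * norm w \<le> (l * norm v) * norm w"
    by (simp add: power2_eq_square mult_ac)
  then show ?thesis
    using \<open>0 \<le> l\<close> by (cases "w = 0") (simp_all add: w_def)
qed

section \<open>The block system\<close>

text \<open>In the application \<open>S = \<surd>(B B\<^sup>*)\<close>, \<open>T = \<surd>(B\<^sup>* B)\<close>, \<open>a = \<alpha>\<close> and \<open>g = \<gamma>\<close>. The hypotheses are
  invariant under \<open>(A, B, C, S, T, a, g) \<mapsto> (C, B\<^sup>*, A, T, S, g, a)\<close>.\<close>
locale block_system =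
  fixes A B C S T Si Ti :: "complex^'n^'n" and a g :: real
  assumes psd_A: "psd A" and psd_C: "psd C" and psd_S: "psd S" and psd_T: "psd T"
    and S_inverse: "S ** Si = mat 1" and T_inverse: "T ** Ti = mat 1"
    and S_eq: "B ** Ti ** cadj B = S" and T_eq: "cadj B ** Si ** B = T"
    and a_nonneg: "0 \<le> a" and g_nonneg: "0 \<le> g"
    and quad_A_le: "\<And>x. quad A x \<le> a * quad S x" and quad_C_le: "\<And>y. quad C y \<le> g * quad T y"
begin

lemma psd_Si: "psd Si"
  by (rule psd_inverse[OF psd_S S_inverse])

lemma quad_Ti_adj: "quad Ti (cadj B *v x) = quad S x"
  using quad_congruence[of "cadj B" Ti x] by (simp add: S_eq)

lemma quad_Si_B: "quad Si (B *v y) = quad T y"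
  using quad_congruence[of B Si y] by (simp add: T_eq)

lemma solution_bounds_rhs_top:
  assumes eq1: "A *v x + B *v y = f" and eq2: "cadj B *v x = C *v y"
  shows "sqrt (quad S x) \<le> g * sqrt (quad Si f)"
    and "sqrt (quad T y) \<le> (1 + a * g) * sqrt (quad Si f)"
proof -
  define X where "X = sqrt (quad S x)"
  define F where "F = sqrt (quad Si f)"
  have "0 \<le> X" "0 \<le> F" by (simp_all add: X_def F_def psd_quad_nonneg psd_S psd_Si)
  have "cinner x f = cinner x (A *v x) + cinner (C *v y) y"
    using eq1 eq2 by (auto simp: cinner_add_right cinner_matrix_right)
  then have "Re (cinner x f) = quad A x + quad C y"
    by (simp add: quad_eq_Re_cinner hermitian_cinner[OF psd_hermitian[OF psd_C]])
  then have energy: "quad A x + quad C y \<le> X * F"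
    using cauchy_schwarz_inverse[OF psd_S S_inverse, of x f] by (simp add: X_def F_def)
  have "X\<^sup>2 = quad Ti (C *v y)"
    using quad_Ti_adj[of x] eq2 psd_quad_nonneg[OF psd_S, of x] by (simp add: X_def)
  also have "\<dots> \<le> g * quad C y"
    by (rule quad_inverse_mult_le[OF psd_C psd_T T_inverse g_nonneg quad_C_le])
  also have "\<dots> \<le> g * (X * F)"
    using energy psd_quad_nonneg[OF psd_A, of x] g_nonneg by (intro mult_left_mono) auto
  finally have XF: "X \<le> g * F"
    by (rule le_mult_if_square_le_mult[OF \<open>0 \<le> X\<close> g_nonneg \<open>0 \<le> F\<close>])
  then show "sqrt (quad S x) \<le> g * sqrt (quad Si f)" by (simp add: X_def F_def)
  have "sqrt (quad Si (A *v x)) \<le> a * X"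
  proof -
    have "quad Si (A *v x) \<le> a * quad A x"
      by (rule quad_inverse_mult_le[OF psd_A psd_S S_inverse a_nonneg quad_A_le])
    also have "\<dots> \<le> a * (a * X\<^sup>2)"
      using quad_A_le[of x] psd_quad_nonneg[OF psd_S, of x] a_nonneg by (intro mult_left_mono) (auto simp: X_def)
    finally have "sqrt (quad Si (A *v x)) \<le> sqrt ((a * X)\<^sup>2)"
      by (intro real_sqrt_le_mono) (simp add: power2_eq_square mult_ac)
    then show ?thesis using a_nonneg \<open>0 \<le> X\<close> by simp
  qed
  have "B *v y = f + - (A *v x)"
    using eq1 by (auto simp: algebra_simps)
  then have "sqrt (quad T y) = sqrt (quad Si (f + - (A *v x)))"
    by (metis quad_Si_B)
  also have "\<dots> \<le> F + sqrt (quad Si (A *v x))"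
    using psd_sqrt_quad_triangle[OF psd_Si, of f "- (A *v x)"] by (simp add: F_def quad_uminus_vector)
  also have "\<dots> \<le> F + a * (g * F)"
    using \<open>sqrt (quad Si (A *v x)) \<le> a * X\<close> mult_left_mono[OF XF a_nonneg] by linarith
  finally show "sqrt (quad T y) \<le> (1 + a * g) * sqrt (quad Si f)"
    by (simp add: F_def algebra_simps)
qed

lemma solution_bounds_rhs_bottom:
  assumes eq1: "A *v x + B *v y = 0" and eq2: "cadj B *v x - C *v y = h"
  shows "sqrt (quad T y) \<le> a * sqrt (quad Ti h)"
    and "sqrt (quad S x) \<le> (1 + a * g) * sqrt (quad Ti h)"
proof -
  interpret swapped: block_system C "cadj B" A T S Ti Si g a
    by unfold_locales (use psd_A psd_C psd_S psd_T S_inverse T_inverse S_eq T_eq a_nonneg g_nonneg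
        quad_A_le quad_C_le in auto)
  have "C *v y + cadj B *v (- x) = - h" and "cadj (cadj B) *v y = A *v (- x)"
    using eq1 eq2 by (auto simp: matrix_vector_mult_uminus_right algebra_simps eq_neg_iff_add_eq_0)
  from swapped.solution_bounds_rhs_top[OF this] show
    "sqrt (quad T y) \<le> a * sqrt (quad Ti h)" and "sqrt (quad S x) \<le> (1 + a * g) * sqrt (quad Ti h)"
    by (simp_all add: quad_uminus_vector mult.commute)
qed

lemma solution_bounds:
  assumes "A *v x1 + B *v y1 = f" and "cadj B *v x1 - C *v y1 = 0"
    and "A *v x2 + B *v y2 = 0" and "cadj B *v x2 - C *v y2 = h"
  shows "sqrt (quad S (x1 + x2)) \<le> max a g * sqrt (quad Si f) + (1 + a * g) * sqrt (quad Ti h)"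
    and "sqrt (quad T (y1 + y2)) \<le> (1 + a * g) * sqrt (quad Si f) + max a g * sqrt (quad Ti h)"
proof -
  have eq2: "cadj B *v x1 = C *v y1" using assms(2) by simp
  have F: "0 \<le> sqrt (quad Si f)" and G: "0 \<le> sqrt (quad Ti h)"
    using psd_quad_nonneg[OF psd_Si] psd_quad_nonneg[OF psd_inverse[OF psd_T T_inverse]] by simp_all
  have "sqrt (quad S (x1 + x2)) \<le> sqrt (quad S x1) + sqrt (quad S x2)"
    by (rule psd_sqrt_quad_triangle[OF psd_S])
  also have "\<dots> \<le> g * sqrt (quad Si f) + (1 + a * g) * sqrt (quad Ti h)"
    using solution_bounds_rhs_top(1)[OF assms(1) eq2] solution_bounds_rhs_bottom(2)[OF assms(3,4)] by linarith
  also have "\<dots> \<le> max a g * sqrt (quad Si f) + (1 + a * g) * sqrt (quad Ti h)"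
    using F by (simp add: mult_right_mono)
  finally show "sqrt (quad S (x1 + x2)) \<le> max a g * sqrt (quad Si f) + (1 + a * g) * sqrt (quad Ti h)" .
  have "sqrt (quad T (y1 + y2)) \<le> sqrt (quad T y1) + sqrt (quad T y2)"
    by (rule psd_sqrt_quad_triangle[OF psd_T])
  also have "\<dots> \<le> (1 + a * g) * sqrt (quad Si f) + a * sqrt (quad Ti h)"
    using solution_bounds_rhs_top(2)[OF assms(1) eq2] solution_bounds_rhs_bottom(1)[OF assms(3,4)] by linarith
  also have "\<dots> \<le> (1 + a * g) * sqrt (quad Si f) + max a g * sqrt (quad Ti h)"
    using G by (simp add: mult_right_mono)
  finally show "sqrt (quad T (y1 + y2)) \<le> (1 + a * g) * sqrt (quad Si f) + max a g * sqrt (quad Ti h)" .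
qed

end

definition vpair :: "'a^'m::finite \<Rightarrow> 'a^'n::finite \<Rightarrow> 'a^('m + 'n)" where
  "vpair x y = (\<chi> k. case k of Inl i \<Rightarrow> x $ i | Inr i \<Rightarrow> y $ i)"

definition vfst :: "'a^('m::finite + 'n::finite) \<Rightarrow> 'a^'m" where
  "vfst z = (\<chi> i. z $ Inl i)"

definition vsnd :: "'a^('m::finite + 'n::finite) \<Rightarrow> 'a^'n" where
  "vsnd z = (\<chi> i. z $ Inr i)"

lemma vpair_vfst_vsnd [simp]: "vpair (vfst z) (vsnd z) = z"
  by (simp add: vpair_def vfst_def vsnd_def vec_eq_iff split: sum.split)

lemma vpair_add: "vpair x y + vpair x' y' = vpair (x + x') (y + y')"
  by (simp add: vpair_def vec_eq_iff split: sum.split)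

lemma vpair_eq_0_iff [simp]: "vpair x y = 0 \<longleftrightarrow> x = 0 \<and> y = 0"
  by (auto simp: vpair_def vec_eq_iff split: sum.split)

lemma vfst_vpair [simp]: "vfst (vpair x y) = x"
  by (simp add: vpair_def vfst_def vec_eq_iff)

lemma vsnd_vpair [simp]: "vsnd (vpair x y) = y"
  by (simp add: vpair_def vsnd_def vec_eq_iff)

lemma vpair_eq_iff: "vpair x y = vpair x' y' \<longleftrightarrow> x = x' \<and> y = y'"
  by (metis vfst_vpair vsnd_vpair)

lemma sum_UNIV_Plus:
  "(\<Sum>k\<in>(UNIV::('a::finite + 'b::finite) set). h k) = (\<Sum>i\<in>UNIV. h (Inl i)) + (\<Sum>i\<in>UNIV. h (Inr i))"
proof -
  have "sum h (UNIV <+> UNIV) = sum (h \<circ> Inl) (UNIV::'a set) + sum (h \<circ> Inr) (UNIV::'b set)"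
    by (rule sum.Plus) simp_all
  then show ?thesis by (simp add: o_def)
qed

lemma norm_vpair: "(norm (vpair x y))\<^sup>2 = (norm x)\<^sup>2 + (norm (y :: 'a::real_normed_vector^'n))\<^sup>2"
proof -
  have sq: "(norm v)\<^sup>2 = (\<Sum>i\<in>UNIV. (norm (v $ i))\<^sup>2)" for v :: "'a^'k"
    by (simp add: norm_vec_def L2_set_def sum_nonneg)
  show ?thesis
    unfolding sq sum_UNIV_Plus by (simp add: vpair_def)
qed

lemma block_H_vpair:
  "block_H A B C *v vpair x y = vpair (A *v x + B *v y) (cadj B *v x - C *v y)"
  by (simp add: block_H_def vpair_def matrix_vector_mult_def vec_eq_iff sum_UNIV_Plus sum_negf sum_subtractf
      split: sum.split)

lemma sum_squares_symmetric_le: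
  fixes m k u v :: real
  assumes "0 \<le> m" and "0 \<le> k"
  shows "(m * u + k * v)\<^sup>2 + (k * u + m * v)\<^sup>2 \<le> (m + k)\<^sup>2 * (u\<^sup>2 + v\<^sup>2)"
proof -
  have "0 \<le> 2 * (m * k) * (u - v)\<^sup>2" using assms by simp
  then show ?thesis by (simp add: power2_eq_square algebra_simps)
qed

text \<open>In the application \<open>l = \<parallel>B\<^sup>-\<^sup>1\<parallel>\<close>.\<close>
locale bounded_block_system = block_system +
  fixes l :: real
  assumes norm_le_quad_S: "\<And>x. (norm x)\<^sup>2 \<le> l * quad S x"
    and norm_le_quad_T: "\<And>y. (norm y)\<^sup>2 \<le> l * quad T y"
    and quad_Si_le: "\<And>f. quad Si f \<le> l * (norm f)\<^sup>2"
    and quad_Ti_le: "\<And>h. quad Ti h \<le> l * (norm h)\<^sup>2"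
begin

lemma l_nonneg: "0 \<le> l"
proof -
  have "1 \<le> l * quad S (axis undefined 1)"
    using norm_le_quad_S[of "axis undefined 1"] by simp
  then have "0 < l * quad S (axis undefined 1)" by linarith
  then show ?thesis
    using psd_quad_nonneg[OF psd_S, of "axis undefined 1"] by (auto simp: zero_less_mult_iff)
qed

lemma norm_le_of_sqrt_quad_le:
  assumes norm_le: "(norm x)\<^sup>2 \<le> l * quad P x" and "0 \<le> m" and "0 \<le> k"
    and le: "sqrt (quad P x) \<le> m * sqrt (quad Si f) + k * sqrt (quad Ti h)"
  shows "norm x \<le> l * (m * norm f + k * norm h)"
proof -
  have sqrt_le: "sqrt (quad Si f) \<le> sqrt l * norm f" "sqrt (quad Ti h) \<le> sqrt l * norm h"
    using real_sqrt_le_mono[OF quad_Si_le[of f]] real_sqrt_le_mono[OF quad_Ti_le[of h]] l_nonneg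
    by (simp_all add: real_sqrt_mult)
  have "norm x \<le> sqrt l * sqrt (quad P x)"
    using real_sqrt_le_mono[OF norm_le] by (simp add: real_sqrt_mult)
  also have "\<dots> \<le> sqrt l * (m * (sqrt l * norm f) + k * (sqrt l * norm h))"
    using le sqrt_le \<open>0 \<le> m\<close> \<open>0 \<le> k\<close> l_nonneg
    by (intro mult_left_mono add_mono order_trans[OF le]) (auto intro: mult_left_mono)
  also have "\<dots> = (sqrt l * sqrt l) * (m * norm f + k * norm h)"
    by (simp only: distrib_left mult.assoc mult.left_commute)
  also have "\<dots> = l * (m * norm f + k * norm h)"
    using l_nonneg by simp
  finally show ?thesis .
qed

lemma block_H_injective:
  assumes "block_H A B C *v z = 0"
  shows "z = 0"
proof -
  obtain x y where z: "z = vpair x y" using vpair_vfst_vsnd by metis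
  have "A *v x + B *v y = 0" and "cadj B *v x = C *v y"
    using assms by (simp_all add: z block_H_vpair)
  from solution_bounds_rhs_top[OF this] have "quad S x \<le> 0" and "quad T y \<le> 0"
    by simp_all
  then have "l * quad S x \<le> 0" and "l * quad T y \<le> 0"
    using l_nonneg by (simp_all add: mult_nonneg_nonpos)
  then have "(norm x)\<^sup>2 \<le> 0" and "(norm y)\<^sup>2 \<le> 0"
    using norm_le_quad_S[of x] norm_le_quad_T[of y] by linarith+
  then show ?thesis by (simp add: z)
qed

lemma invertible_block_H: "invertible (block_H A B C)"
  using block_H_injective by (simp add: invertible_left_inverse matrix_left_invertible_ker)

lemma norm_le_norm_block_H: "norm z \<le> l * (1 + max a g + a * g) * norm (block_H A B C *v z)"
proof -
  let ?H = "block_H A B C"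
  define m k where "m = max a g" and "k = 1 + a * g"
  have "0 \<le> m" "0 \<le> k" using a_nonneg g_nonneg by (simp_all add: m_def k_def)
  obtain f h where w: "?H *v z = vpair f h" using vpair_vfst_vsnd by metis
  obtain x1 y1 where z1: "matrix_inv ?H *v vpair f 0 = vpair x1 y1" using vpair_vfst_vsnd by metis
  obtain x2 y2 where z2: "matrix_inv ?H *v vpair 0 h = vpair x2 y2" using vpair_vfst_vsnd by metis
  note inv = matrix_inv_inverse[OF invertible_block_H]
  have "z = vpair x1 y1 + vpair x2 y2"
    using matrix_vector_mult_inverse[OF inv(2), of z]
    by (simp add: w z1[symmetric] z2[symmetric] matrix_vector_right_distrib[symmetric] vpair_add)
  then have z: "z = vpair (x1 + x2) (y1 + y2)" by (simp add: vpair_add)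
  have "?H *v vpair x1 y1 = vpair f 0" and "?H *v vpair x2 y2 = vpair 0 h"
    using matrix_vector_mult_inverse[OF inv(1)] by (simp_all add: z1[symmetric] z2[symmetric])
  then have "A *v x1 + B *v y1 = f" "cadj B *v x1 - C *v y1 = 0"
    and "A *v x2 + B *v y2 = 0" "cadj B *v x2 - C *v y2 = h"
    by (simp_all add: block_H_vpair vpair_eq_iff)
  note bounds = solution_bounds[OF this, folded m_def k_def]
  have "norm (x1 + x2) \<le> l * (m * norm f + k * norm h)"
    by (rule norm_le_of_sqrt_quad_le[OF norm_le_quad_S \<open>0 \<le> m\<close> \<open>0 \<le> k\<close> bounds(1)])
  moreover have "norm (y1 + y2) \<le> l * (k * norm f + m * norm h)"
    by (rule norm_le_of_sqrt_quad_le[OF norm_le_quad_T \<open>0 \<le> k\<close> \<open>0 \<le> m\<close> bounds(2)])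
  ultimately have "(norm z)\<^sup>2 \<le> (l * (m * norm f + k * norm h))\<^sup>2 + (l * (k * norm f + m * norm h))\<^sup>2"
    by (simp add: z norm_vpair add_mono power_mono)
  also have "\<dots> \<le> l\<^sup>2 * ((m + k)\<^sup>2 * ((norm f)\<^sup>2 + (norm h)\<^sup>2))"
    using sum_squares_symmetric_le[OF \<open>0 \<le> m\<close> \<open>0 \<le> k\<close>, of "norm f" "norm h"]
    by (simp add: power_mult_distrib distrib_left[symmetric] mult_left_mono)
  also have "\<dots> = (l * (m + k) * norm (?H *v z))\<^sup>2"
    by (simp add: w norm_vpair power_mult_distrib)
  finally show ?thesis
    using l_nonneg \<open>0 \<le> m\<close> \<open>0 \<le> k\<close> by (simp add: m_def k_def power2_le_iff_abs_le add_ac)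
qed

lemma spec_norm_inverse_block_H:
  "spec_norm (matrix_inv (block_H A B C)) \<le> l * (1 + max a g + a * g)"
  unfolding spec_norm_def
proof (rule onorm_le)
  fix w
  show "norm (matrix_inv (block_H A B C) *v w) \<le> l * (1 + max a g + a * g) * norm w"
    using norm_le_norm_block_H[of "matrix_inv (block_H A B C) *v w"]
    by (simp add: matrix_vector_mult_inverse[OF matrix_inv_inverse(1)[OF invertible_block_H]])
qed

end

lemma psd_gram: "psd (M ** cadj M)"
  using psd_congruence[OF psd_mat_1, of "cadj M"] by simp

lemma invertible_cadj: "invertible (M::complex^'n^'n) \<Longrightarrow> invertible (cadj M)"
  by (meson cadj_inverse invertible_def)

lemma invertible_psd_sqrt:
  assumes "psd M" and "invertible M"
  shows "invertible (psd_sqrt M)"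
proof -
  have "psd_sqrt M ** (psd_sqrt M ** matrix_inv M) = mat 1"
    by (simp add: matrix_mul_assoc psd_sqrt_psd_square(2)[OF assms(1)] matrix_inv_inverse(1)[OF assms(2)])
  then show ?thesis by (auto simp: invertible_right_inverse)
qed

lemma psd_sqrt_adj_gram:
  fixes B :: "complex^'n^'n"
  assumes "invertible B"
  defines "S \<equiv> psd_sqrt (B ** cadj B)"
  shows "psd_sqrt (cadj B ** B) = cadj B ** matrix_inv S ** B"
    and "psd_sqrt (cadj B ** B) ** (matrix_inv B ** S ** cadj (matrix_inv B)) = mat 1"
proof -
  have S: "psd S" "S ** S = B ** cadj B"
    unfolding S_def by (rule psd_sqrt_psd_square[OF psd_gram])+
  have "invertible (B ** cadj B)"
    by (intro invertible_mult assms invertible_cadj)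
  note Si = matrix_inv_inverse[OF invertible_psd_sqrt[OF psd_gram this, folded S_def]]
  have "(cadj B ** matrix_inv S ** B) ** (cadj B ** matrix_inv S ** B)
      = cadj B ** (matrix_inv S ** (S ** S) ** matrix_inv S) ** B"
    by (simp add: S(2) matrix_mul_assoc)
  also have "matrix_inv S ** (S ** S) ** matrix_inv S = mat 1"
    by (simp add: matrix_mul_assoc Si)
  finally have "(cadj B ** matrix_inv S ** B) ** (cadj B ** matrix_inv S ** B) = cadj B ** B"
    by simp
  then show T: "psd_sqrt (cadj B ** B) = cadj B ** matrix_inv S ** B"
    by (intro psd_sqrt_eqI psd_congruence psd_inverse[OF S(1) Si(1)])
  show "psd_sqrt (cadj B ** B) ** (matrix_inv B ** S ** cadj (matrix_inv B)) = mat 1"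
    unfolding T by (simp add: matrix_mul_assoc)
      (simp add: matrix_mul_assoc[symmetric] matrix_inv_inverse[OF assms(1)] Si cadj_inverse)
qed

lemma gram_sqrt_bounds:
  fixes S Si M Mi :: "complex^'n^'n"
  assumes S: "psd S" "S ** S = M ** cadj M" "S ** Si = mat 1"
    and M: "M ** Mi = mat 1" and "0 \<le> l" and Mi_le: "\<And>v. norm (Mi *v v) \<le> l * norm v"
  shows "quad Si f \<le> l * (norm f)\<^sup>2" and "(norm x)\<^sup>2 \<le> l * quad S x"
proof -
  have "Si ** S = mat 1" using S(3) by (simp add: matrix_left_right_inverse)
  have "Si ** Si = cadj Mi ** Mi"
  proof (rule matrix_inverse_unique)
    show "Si ** Si ** (M ** cadj M) = mat 1"
      by (simp add: S(2)[symmetric] matrix_mul_assoc) (simp add: matrix_mul_assoc[symmetric] S(3) \<open>Si ** S = mat 1\<close>)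
    have "cadj M ** cadj Mi = mat 1"
      using M by (simp add: matrix_left_right_inverse cadj_inverse)
    then show "M ** cadj M ** (cadj Mi ** Mi) = mat 1"
      by (simp add: matrix_mul_assoc) (simp add: matrix_mul_assoc[symmetric] M)
  qed
  then have "(norm (Si *v f))\<^sup>2 = (norm (Mi *v f))\<^sup>2" for f
    by (simp add: Re_cinner_self[symmetric] cinner_matrix_left hermitian_cinner matrix_vector_mul_assoc
        psd_hermitian[OF psd_inverse[OF S(1,3)], unfolded hermitian_def])
  then have "norm (Si *v f) \<le> l * norm f" for f
    using Mi_le[of f] by simp
  then have Si_le: "quad Si f \<le> l * (norm f)\<^sup>2" for f
    using quad_le_norm_mult_norm[of Si f] mult_left_mono[OF _ norm_ge_zero, of "norm (Si *v f)" "l * norm f" f]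
    by (simp add: power2_eq_square mult_ac)
  then show "quad Si f \<le> l * (norm f)\<^sup>2" .
  have "(norm x)\<^sup>2 \<le> sqrt (quad S x) * sqrt (quad Si x)"
    using cauchy_schwarz_inverse[OF S(1,3), of x x] by (simp add: Re_cinner_self)
  also have "\<dots> \<le> sqrt (quad S x) * sqrt (l * (norm x)\<^sup>2)"
    by (intro mult_left_mono real_sqrt_le_mono Si_le) (simp add: psd_quad_nonneg[OF S(1)])
  also have "\<dots> = sqrt (l * quad S x) * norm x"
    using \<open>0 \<le> l\<close> by (simp add: real_sqrt_mult mult_ac)
  finally show "(norm x)\<^sup>2 \<le> l * quad S x"
    by (rule square_le_of_square_le_sqrt_mult[rotated]) (simp add: \<open>0 \<le> l\<close> psd_quad_nonneg[OF S(1)])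
qed

lemma Sup_quad_ratio:
  fixes A P :: "complex^'n^'n"
  assumes "psd A" and "psd P" and norm_le: "\<And>x. (norm x)\<^sup>2 \<le> l * quad P x"
  defines "s \<equiv> Sup {Re (qform A x) / Re (qform P x) | x. x \<noteq> 0}"
  shows "0 \<le> s" and "quad A x \<le> s * quad P x"
proof -
  have pos: "0 < quad P x" if "x \<noteq> 0" for x
  proof -
    have "0 < l * quad P x"
      using order_less_le_trans[OF _ norm_le[of x]] that by simp
    then show ?thesis
      using psd_quad_nonneg[OF assms(2), of x] by (auto simp: zero_less_mult_iff)
  qed
  have bdd: "bdd_above {Re (qform A x) / Re (qform P x) | x. x \<noteq> 0}"
  proof (rule bdd_aboveI)
    fix r assume "r \<in> {Re (qform A x) / Re (qform P x) | x. x \<noteq> 0}"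
    then obtain x where "x \<noteq> 0" and r: "r = quad A x / quad P x" by (auto simp: quad_def)
    have "quad A x \<le> onorm ((*v) A) * (l * quad P x)"
      using quad_le_onorm[of A x] mult_left_mono[OF norm_le[of x] onorm_pos_le[of "(*v) A"]] by simp
    then show "r \<le> onorm ((*v) A) * l"
      using pos[OF \<open>x \<noteq> 0\<close>] by (simp add: r divide_le_eq mult_ac)
  qed
  have le: "quad A x / quad P x \<le> s" if "x \<noteq> 0" for x
    unfolding s_def by (rule cSup_upper[OF _ bdd]) (use that in \<open>auto simp: quad_def\<close>)
  show "0 \<le> s"
    using le[of "axis undefined 1"] psd_quad_nonneg[OF assms(1), of "axis undefined 1"] pos[of "axis undefined 1"]
    by (simp add: order_trans[OF divide_nonneg_pos])
  show "quad A x \<le> s * quad P x"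
    using le[of x] pos[of x] by (cases "x = 0") (simp_all add: divide_le_eq)
qed

lemma bounded_block_system_sqrt:
  fixes A B C :: "complex^'n^'n"
  assumes "psd A" and "psd C" and "invertible B"
  defines "S \<equiv> psd_sqrt (B ** cadj B)" and "T \<equiv> psd_sqrt (cadj B ** B)"
  shows "bounded_block_system A B C S T (matrix_inv S) (matrix_inv T)
    (Sup {Re (qform A x) / Re (qform S x) | x. x \<noteq> 0}) (Sup {Re (qform C x) / Re (qform T x) | x. x \<noteq> 0})
    (spec_norm (matrix_inv B))"
proof -
  define Bi l where "Bi = matrix_inv B" and "l = spec_norm Bi"
  note Bi = matrix_inv_inverse[OF assms(3), folded Bi_def]
  have "0 \<le> l" by (simp add: l_def spec_norm_def onorm_pos_le)
  have Bi_le: "norm (Bi *v v) \<le> l * norm v" for v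
    unfolding l_def spec_norm_def by (rule onorm) simp
  have S: "psd S" "S ** S = B ** cadj B"
    unfolding S_def by (rule psd_sqrt_psd_square[OF psd_gram])+
  have T: "psd T" "T ** T = cadj B ** cadj (cadj B)"
    unfolding T_def using psd_sqrt_psd_square[OF psd_gram[of "cadj B"]] by simp_all
  have Si: "S ** matrix_inv S = mat 1"
    unfolding S_def by (intro matrix_inv_inverse invertible_psd_sqrt psd_gram invertible_mult assms(3) invertible_cadj)
  have T_eq: "T = cadj B ** matrix_inv S ** B" and T_inv: "T ** (Bi ** S ** cadj Bi) = mat 1"
    using psd_sqrt_adj_gram[OF assms(3)] by (simp_all add: S_def T_def Bi_def)
  have Ti: "matrix_inv T = Bi ** S ** cadj Bi" by (rule matrix_inv_eqI[OF T_inv])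
  have "B ** matrix_inv T ** cadj B = S"
    by (simp add: Ti matrix_mul_assoc Bi) (simp add: matrix_mul_assoc[symmetric] Bi cadj_inverse)
  have "cadj B ** cadj Bi = mat 1" using Bi by (simp add: cadj_inverse)
  note S_bounds = gram_sqrt_bounds[OF S Si Bi(1) \<open>0 \<le> l\<close> Bi_le]
  note T_bounds = gram_sqrt_bounds[OF T T_inv[folded Ti] \<open>cadj B ** cadj Bi = mat 1\<close>
      \<open>0 \<le> l\<close> norm_cadj_matrix_vector_le[OF \<open>0 \<le> l\<close> Bi_le]]
  show ?thesis
    using assms(1,2) S(1) T(1) Si T_inv[folded Ti] \<open>B ** matrix_inv T ** cadj B = S\<close>
      T_eq S_bounds T_bounds Sup_quad_ratio[OF assms(1) S(1) S_bounds(2)] Sup_quad_ratio[OF assms(2) T(1) T_bounds(2)]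
    by unfold_locales (simp_all add: l_def Bi_def)
qed

theorem theorem3p3:
  fixes A B C :: "complex^'n^'n"
  assumes "psd A" and "psd C" and "invertible B"
  defines "\<alpha> \<equiv> Sup {Re (qform A x) / Re (qform (psd_sqrt (B ** cadj B)) x) | x. x \<noteq> 0}"
      and "\<gamma> \<equiv> Sup {Re (qform C x) / Re (qform (psd_sqrt (cadj B ** B)) x) | x. x \<noteq> 0}"
  shows "invertible (block_H A B C)
     \<and> spec_norm (matrix_inv (block_H A B C))
         \<le> spec_norm (matrix_inv B) * (1 + max \<alpha> \<gamma> + \<alpha> * \<gamma>)"
proof -
  interpret bounded_block_system A B C "psd_sqrt (B ** cadj B)" "psd_sqrt (cadj B ** B)"
      "matrix_inv (psd_sqrt (B ** cadj B))" "matrix_inv (psd_sqrt (cadj B ** B))" \<alpha> \<gamma> "spec_norm (matrix_inv B)"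
    unfolding \<alpha>_def \<gamma>_def by (rule bounded_block_system_sqrt[OF assms(1-3)])
  show ?thesis
    using invertible_block_H spec_norm_inverse_block_H by simp
qed

end
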